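(* Let $F:\mathbb{R}^p\to\mathbb{R}^p$ be single-valued and $T:\mathbb{R}^p\rightrightarrows\mathbb{R}^p$ be maximally $3$-cyclically monotone, $\Phi:=F+T$, and let $x^\star\in\mathrm{zer}\,\Phi$. Let $\kappa_1,\kappa_2\ge0$, $\beta>0$, $\eta>0$, and let $\{(x^k,y^k)\}$ be generated by: start from $x^0\in\mathrm{dom}\,\Phi$, set $x^{-1}=y^{-1}:=x^0$, and for $k\ge0$ $$y^k:=J_{\frac{\eta}{\beta}T}\big(x^k-\tfrac{\eta}{\beta}u^k\big),\qquad x^{k+1}:=J_{\eta T}\big(x^k-\eta Fy^k\big),$$ where $u^k\in\mathbb{R}^p$ satisfies $\|Fx^k-u^k\|^2\le\kappa_1\|Fx^k-Fy^{k-1}\|^2+\kappa_2\|Fx^k-Fx^{k-1}\|^2$. Then for any $\gamma>0$ and $k\ge0$, $$\begin{aligned}\|x^{k+1}-x^\star\|^2\le{}&\|x^k-x^\star\|^2-(1-\beta)\|x^{k+1}-x^k\|^2-\beta\|x^k-y^k\|^2-(\beta-\gamma)\|x^{k+1}-y^k\|^2\\&+\tfrac{\eta^2}{\gamma}\|Fy^k-u^k\|^2-2\eta\langle Fy^k-Fx^\star,y^k-x^\star\rangle.\end{aligned}$$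
   Context: $\mathrm{zer}\,\Phi:=\{x:0\in Fx+Tx\}$. $J_{\lambda T}:=(\mathbb{I}+\lambda T)^{-1}$ is the resolvent of $\lambda T$. $T$ is $3$-cyclically monotone if $\sum_{i=1}^3\langle u^i,x^i-x^{i+1}\rangle\ge0$ for all $(x^i,u^i)\in\mathrm{gra}\,T$ with $x^4=x^1$; maximally so if its graph is not properly contained in the graph of another $3$-cyclically monotone operator. *)

theory Defs
  imports "HOL-Analysis.Analysis"
begin

definition cyclically_monotone3 :: "('a::real_inner \<Rightarrow> 'a set) \<Rightarrow> bool" where
  "cyclically_monotone3 T \<longleftrightarrow>
     (\<forall>x1 x2 x3 u1 u2 u3. u1 \<in> T x1 \<and> u2 \<in> T x2 \<and> u3 \<in> T x3 \<longrightarrow>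
        inner u1 (x1 - x2) + inner u2 (x2 - x3) + inner u3 (x3 - x1) \<ge> 0)"

definition max_cyclically_monotone3 :: "('a::real_inner \<Rightarrow> 'a set) \<Rightarrow> bool" where
  "max_cyclically_monotone3 T \<longleftrightarrow> cyclically_monotone3 T \<and>
     (\<forall>S. cyclically_monotone3 S \<and> (\<forall>x. T x \<subseteq> S x) \<longrightarrow> S = T)"

definition op_sum :: "('a::real_vector \<Rightarrow> 'a) \<Rightarrow> ('a \<Rightarrow> 'a set) \<Rightarrow> 'a \<Rightarrow> 'a set" where
  "op_sum F T x = (\<lambda>v. F x + v) ` T x"

definition zer :: "('a::real_vector \<Rightarrow> 'a set) \<Rightarrow> 'a set" where
  "zer Phi = {x. 0 \<in> Phi x}"

definition op_dom :: "('a \<Rightarrow> 'b set) \<Rightarrow> 'a set" where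
  "op_dom Phi = {x. Phi x \<noteq> {}}"

text \<open>Resolvent J_{lam T} = (I + lam T)^{-1}, as a set-valued map:
  y \<in> J z iff z \<in> y + lam T y.\<close>
definition resolvent :: "real \<Rightarrow> ('a::real_vector \<Rightarrow> 'a set) \<Rightarrow> 'a \<Rightarrow> 'a set" where
  "resolvent lam T z = {y. z \<in> (\<lambda>v. y + lam *\<^sub>R v) ` T y}"

end

theory Submission
  imports Defs
begin

text \<open>Apply 3-cyclic monotonicity of \<open>T\<close> to the three graph points \<open>(x\<^sup>k\<^sup>+\<^sup>1, w)\<close>,
  \<open>(x\<^sup>\<star>, -F x\<^sup>\<star>)\<close> and \<open>(y\<^sup>k, v)\<close> supplied by the two resolvent steps and the zero
  condition. Solving the resolvent equations for \<open>\<eta> w\<close> and \<open>\<eta> v\<close> and expanding with the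
  three-point identity \<open>2\<langle>a - b, b - c\<rangle> = \<parallel>a - c\<parallel>\<^sup>2 - \<parallel>a - b\<parallel>\<^sup>2 - \<parallel>b - c\<parallel>\<^sup>2\<close> yields
  the estimate except for the cross term \<open>2\<eta>\<langle>F y\<^sup>k - u\<^sup>k, y\<^sup>k - x\<^sup>k\<^sup>+\<^sup>1\<rangle>\<close>, which Young's
  inequality bounds by \<open>\<gamma>\<parallel>x\<^sup>k\<^sup>+\<^sup>1 - y\<^sup>k\<parallel>\<^sup>2 + \<eta>\<^sup>2/\<gamma> \<parallel>F y\<^sup>k - u\<^sup>k\<parallel>\<^sup>2\<close>.\<close>

lemma mem_resolvent_iff:
  "y \<in> resolvent lam T z \<longleftrightarrow> (\<exists>v\<in>T y. z = y + lam *\<^sub>R v)"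
  unfolding resolvent_def by auto

lemma mem_zer_op_sum_iff: "x \<in> zer (op_sum F T) \<longleftrightarrow> - F x \<in> T x"
  unfolding zer_def op_sum_def by (auto simp: add_eq_0_iff)

lemma cyclically_monotone3D:
  assumes "cyclically_monotone3 T" "u1 \<in> T x1" "u2 \<in> T x2" "u3 \<in> T x3"
  shows "0 \<le> inner u1 (x1 - x2) + inner u2 (x2 - x3) + inner u3 (x3 - x1)"
  using assms unfolding cyclically_monotone3_def by blast

lemma inner_three_point:
  fixes a b c :: "'a::real_inner"
  shows "2 * inner (a - b) (b - c) = (norm (a - c))\<^sup>2 - (norm (a - b))\<^sup>2 - (norm (b - c))\<^sup>2"
  using dot_norm[of "a - b" "b - c"] by simp

lemma young_inner:
  fixes p q :: "'a::real_inner"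
  assumes "\<gamma> > 0"
  shows "2 * inner p q \<le> \<gamma> * (norm p)\<^sup>2 + (norm q)\<^sup>2 / \<gamma>"
proof -
  have "(norm (\<gamma> *\<^sub>R p - q))\<^sup>2 = \<gamma>\<^sup>2 * (norm p)\<^sup>2 - 2 * \<gamma> * inner p q + (norm q)\<^sup>2"
    using dot_norm_neg[of "\<gamma> *\<^sub>R p" q] assms by (simp add: power_mult_distrib)
  then have "2 * \<gamma> * inner p q \<le> \<gamma>\<^sup>2 * (norm p)\<^sup>2 + (norm q)\<^sup>2"
    using zero_le_power2[of "norm (\<gamma> *\<^sub>R p - q)"] by linarith
  then show ?thesis using assms by (simp add: field_simps power2_eq_square)
qed

lemma resolvent_step_estimate:
  fixes F :: "'a::real_inner \<Rightarrow> 'a" and x x' y u z :: 'a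
  assumes T: "cyclically_monotone3 T" and zero: "- F z \<in> T z"
    and beta: "\<beta> > 0" and eta: "\<eta> > 0" and gamma: "\<gamma> > 0"
    and ystep: "y \<in> resolvent (\<eta> / \<beta>) T (x - (\<eta> / \<beta>) *\<^sub>R u)"
    and xstep: "x' \<in> resolvent \<eta> T (x - \<eta> *\<^sub>R F y)"
  shows "(norm (x' - z))\<^sup>2 \<le>
      (norm (x - z))\<^sup>2 - (1 - \<beta>) * (norm (x' - x))\<^sup>2
      - \<beta> * (norm (x - y))\<^sup>2 - (\<beta> - \<gamma>) * (norm (x' - y))\<^sup>2
      + \<eta>\<^sup>2 / \<gamma> * (norm (F y - u))\<^sup>2
      - 2 * \<eta> * inner (F y - F z) (y - z)"
proof -
  obtain v where v: "v \<in> T y" and hv: "x - (\<eta> / \<beta>) *\<^sub>R u = y + (\<eta> / \<beta>) *\<^sub>R v"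
    using ystep by (auto simp: mem_resolvent_iff)
  obtain w where w: "w \<in> T x'" and hw: "x - \<eta> *\<^sub>R F y = x' + \<eta> *\<^sub>R w"
    using xstep by (auto simp: mem_resolvent_iff)
  have \<eta>v: "\<eta> *\<^sub>R v = \<beta> *\<^sub>R (x - y) - \<eta> *\<^sub>R u"
  proof -
    have "\<beta> *\<^sub>R (x - (\<eta> / \<beta>) *\<^sub>R u) = \<beta> *\<^sub>R (y + (\<eta> / \<beta>) *\<^sub>R v)"
      using hv by simp
    then show ?thesis using beta by (simp add: algebra_simps)
  qed
  have \<eta>w: "\<eta> *\<^sub>R w = (x - x') - \<eta> *\<^sub>R F y"
    using hw by (simp add: algebra_simps)
  have "0 \<le> \<eta> * (inner w (x' - z) + inner (- F z) (z - y) + inner v (y - x'))"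
    using cyclically_monotone3D[OF T w zero v] eta by simp
  also have "\<dots> = inner (\<eta> *\<^sub>R w) (x' - z) + inner (\<eta> *\<^sub>R F z) (y - z) + inner (\<eta> *\<^sub>R v) (y - x')"
    by (simp add: distrib_left flip: inner_minus_right)
  also have "\<dots> = inner (x - x') (x' - z) + \<beta> * inner (x - y) (y - x')
      + \<eta> * inner (F y - u) (y - x') - \<eta> * inner (F y - F z) (y - z)"
    unfolding \<eta>w \<eta>v by (simp add: inner_diff_left inner_diff_right algebra_simps)
  finally have mono: "0 \<le> inner (x - x') (x' - z) + \<beta> * inner (x - y) (y - x')
      + \<eta> * inner (F y - u) (y - x') - \<eta> * inner (F y - F z) (y - z)" .
  have young: "2 * \<eta> * inner (F y - u) (y - x')
      \<le> \<gamma> * (norm (x' - y))\<^sup>2 + \<eta>\<^sup>2 / \<gamma> * (norm (F y - u))\<^sup>2"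
    using young_inner[OF gamma, of "y - x'" "\<eta> *\<^sub>R (F y - u)"] eta
    by (simp add: inner_commute power_mult_distrib norm_minus_commute)
  have three_point_z: "2 * inner (x - x') (x' - z)
      = (norm (x - z))\<^sup>2 - (norm (x' - x))\<^sup>2 - (norm (x' - z))\<^sup>2"
    using inner_three_point[of x x' z] by (simp add: norm_minus_commute)
  have "2 * inner (x - y) (y - x') = (norm (x' - x))\<^sup>2 - (norm (x - y))\<^sup>2 - (norm (x' - y))\<^sup>2"
    using inner_three_point[of x y x'] by (simp add: norm_minus_commute)
  then have three_point_y: "2 * (\<beta> * inner (x - y) (y - x'))
      = \<beta> * (norm (x' - x))\<^sup>2 - \<beta> * (norm (x - y))\<^sup>2 - \<beta> * (norm (x' - y))\<^sup>2"
    by (simp add: mult.left_commute[of 2 \<beta>] right_diff_distrib)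
  show ?thesis
    using mono young three_point_z three_point_y by (simp add: algebra_simps)
qed

theorem lemma4:
  fixes F :: "real^'p \<Rightarrow> real^'p" and T :: "real^'p \<Rightarrow> (real^'p) set"
    and xstar :: "real^'p" and x y u :: "nat \<Rightarrow> real^'p"
    and \<kappa>1 \<kappa>2 \<beta> \<eta> :: real
  assumes T: "max_cyclically_monotone3 T"
    and xstar: "xstar \<in> zer (op_sum F T)"
    and k1: "\<kappa>1 \<ge> 0" and k2: "\<kappa>2 \<ge> 0" and beta: "\<beta> > 0" and eta: "\<eta> > 0"
    and x0: "x 0 \<in> op_dom (op_sum F T)"
    and ystep: "\<And>k. y k \<in> resolvent (\<eta> / \<beta>) T (x k - (\<eta> / \<beta>) *\<^sub>R u k)"
    and xstep: "\<And>k. x (Suc k) \<in> resolvent \<eta> T (x k - \<eta> *\<^sub>R F (y k))"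
    and uerr: "\<And>k. (norm (F (x k) - u k))\<^sup>2
        \<le> \<kappa>1 * (norm (F (x k) - F (if k = 0 then x 0 else y (k - 1))))\<^sup>2
          + \<kappa>2 * (norm (F (x k) - F (if k = 0 then x 0 else x (k - 1))))\<^sup>2"
  shows "\<forall>\<gamma>>0. \<forall>k. (norm (x (Suc k) - xstar))\<^sup>2 \<le>
      (norm (x k - xstar))\<^sup>2 - (1 - \<beta>) * (norm (x (Suc k) - x k))\<^sup>2
      - \<beta> * (norm (x k - y k))\<^sup>2 - (\<beta> - \<gamma>) * (norm (x (Suc k) - y k))\<^sup>2
      + \<eta>\<^sup>2 / \<gamma> * (norm (F (y k) - u k))\<^sup>2
      - 2 * \<eta> * inner (F (y k) - F xstar) (y k - xstar)"
proof -
  have monotone: "cyclically_monotone3 T"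
    using T by (simp add: max_cyclically_monotone3_def)
  have zero: "- F xstar \<in> T xstar"
    using xstar by (simp add: mem_zer_op_sum_iff)
  show ?thesis
    using resolvent_step_estimate[OF monotone zero beta eta _ ystep xstep] by blast
qed
end
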